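(* Let $\mathbb{S}=(S,\Sigma,\{\tau_a\mid a\in L\})$ be an LMP and let $\Lambda$ be a sub-$\sigma$-algebra of $\Sigma$ such that $\Sigma(\mathcal{R}(\Lambda))=\Lambda$. The following are equivalent: (1) $\Lambda$ is stable; (2) $\mathcal{R}(\Lambda)\subseteq\mathcal{R}^T(\Lambda)$; (3) $\mathcal{R}(\Lambda)$ is a state bisimulation.
   Context: An LMP is a triple $(S,\Sigma,\{\tau_a\mid a\in L\})$ with $(S,\Sigma)$ a measurable space, $L$ countable, and each $\tau_a:S\times\Sigma\to[0,1]$ a Markov kernel (subprobability measure in the second argument, measurable in the first). For $R\subseteq S\times S$, $A$ is $R$-closed if $x\in A$, $xRs$ imply $s\in A$; $\Sigma(R)$ is the family of $R$-closed members of $\Sigma$. For $\Gamma\subseteq\mathcal{P}(S)$, $\mathcal{R}(\Gamma)=\{(s,t):\forall A\in\Gamma\,(s\in A\iff t\in A)\}$; for $\Lambda\subseteq\Sigma$, $\mathcal{R}^T(\Lambda)=\{(s,t):\forall a\in L\,\forall E\in\Lambda\ \tau_a(s,E)=\tau_a(t,E)\}$. A family $\Lambda\subseteq\Sigma$ is stable if for all $A\in\Lambda$, rational $r\in[0,1]$ and $a\in L$, $\{s\in S:\tau_a(s,A)>r\}\in\Lambda$. A state bisimulation is a symmetric relation $R$ on $S$ such that whenever $sRt$ and $C\in\Sigma(R)$, $\tau_a(s,C)=\tau_a(t,C)$ for all $a\in L$. *)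

theory Defs
  imports "HOL-Probability.Probability"
begin

text \<open>An LMP: measurable space M (S = space M, Sigma = sets M), a countable label set L,
  and for each label a Markov kernel tau a, i.e. a measurable map from M into the
  Giry space of subprobability measures on M. tau_a(s,E) = measure (tau a s) E.\<close>

definition LMP :: "'a measure \<Rightarrow> 'l set \<Rightarrow> ('l \<Rightarrow> 'a \<Rightarrow> 'a measure) \<Rightarrow> bool" where
  "LMP M L \<tau> \<longleftrightarrow> countable L \<and> (\<forall>a\<in>L. \<tau> a \<in> measurable M (subprob_algebra M))"

definition kern :: "('l \<Rightarrow> 'a \<Rightarrow> 'a measure) \<Rightarrow> 'l \<Rightarrow> 'a \<Rightarrow> 'a set \<Rightarrow> real" where
  "kern \<tau> a s E = measure (\<tau> a s) E"

definition closed_sets :: "'a measure \<Rightarrow> ('a \<times> 'a) set \<Rightarrow> 'a set set" where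
  "closed_sets M R = {A \<in> sets M. \<forall>x s. x \<in> A \<and> (x, s) \<in> R \<longrightarrow> s \<in> A}"

definition rel_of :: "'a measure \<Rightarrow> 'a set set \<Rightarrow> ('a \<times> 'a) set" where
  "rel_of M \<Gamma> = {(s, t). s \<in> space M \<and> t \<in> space M \<and> (\<forall>A\<in>\<Gamma>. s \<in> A \<longleftrightarrow> t \<in> A)}"

definition relT_of :: "'a measure \<Rightarrow> 'l set \<Rightarrow> ('l \<Rightarrow> 'a \<Rightarrow> 'a measure) \<Rightarrow> 'a set set \<Rightarrow> ('a \<times> 'a) set" where
  "relT_of M L \<tau> \<Lambda> = {(s, t). s \<in> space M \<and> t \<in> space M \<and>
      (\<forall>a\<in>L. \<forall>E\<in>\<Lambda>. kern \<tau> a s E = kern \<tau> a t E)}"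

definition lmp_stable :: "'a measure \<Rightarrow> 'l set \<Rightarrow> ('l \<Rightarrow> 'a \<Rightarrow> 'a measure) \<Rightarrow> 'a set set \<Rightarrow> bool" where
  "lmp_stable M L \<tau> \<Lambda> \<longleftrightarrow> (\<forall>A\<in>\<Lambda>. \<forall>r\<in>\<rat>. 0 \<le> r \<longrightarrow> r \<le> 1 \<longrightarrow> (\<forall>a\<in>L.
      {s \<in> space M. kern \<tau> a s A > r} \<in> \<Lambda>))"

definition state_bisim :: "'a measure \<Rightarrow> 'l set \<Rightarrow> ('l \<Rightarrow> 'a \<Rightarrow> 'a measure) \<Rightarrow> ('a \<times> 'a) set \<Rightarrow> bool" where
  "state_bisim M L \<tau> R \<longleftrightarrow> R \<subseteq> space M \<times> space M \<and> sym R \<and>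
     (\<forall>s t. (s, t) \<in> R \<longrightarrow> (\<forall>C\<in>closed_sets M R. \<forall>a\<in>L. kern \<tau> a s C = kern \<tau> a t C))"

end

theory Submission
  imports Defs
begin

text \<open>If two states lie in the same sets of \<open>\<Lambda>\<close> and \<open>\<Lambda>\<close> is stable, then they lie in the
  same rational superlevel sets of each \<open>\<tau>\<^sub>a(-,E)\<close>, \<open>E \<in> \<Lambda>\<close>, and a value in \<open>[0,1]\<close> is
  determined by the rationals below it. Conversely, if \<open>\<R>(\<Lambda>)\<close>-related states have equal
  transition probabilities into \<open>\<Lambda>\<close>, every such superlevel set is \<open>\<R>(\<Lambda>)\<close>-closed and
  measurable, hence in \<open>\<Sigma>(\<R>(\<Lambda>)) = \<Lambda>\<close>. The same identity makes condition (2) literally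
  the bisimulation condition for \<open>\<R>(\<Lambda>)\<close>.\<close>

lemma kern_bounded:
  assumes "LMP M L \<tau>" "a \<in> L" "s \<in> space M"
  shows "0 \<le> kern \<tau> a s E" "kern \<tau> a s E \<le> 1"
proof -
  have "\<tau> a \<in> measurable M (subprob_algebra M)"
    using assms(1,2) unfolding LMP_def by auto
  then have "subprob_space (\<tau> a s)"
    using assms(3) by (rule subprob_space_kernel)
  then show "0 \<le> kern \<tau> a s E" "kern \<tau> a s E \<le> 1"
    unfolding kern_def by (simp_all add: subprob_space.subprob_measure_le_1)
qed

lemma kern_borel_measurable:
  assumes "LMP M L \<tau>" "a \<in> L" "A \<in> sets M"
  shows "(\<lambda>s. kern \<tau> a s A) \<in> borel_measurable M"
proof -
  have "\<tau> a \<in> measurable M (subprob_algebra M)"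
    using assms(1,2) unfolding LMP_def by auto
  then show ?thesis
    unfolding kern_def using measurable_measure_subprob_algebra[OF assms(3)]
    by (rule measurable_compose)
qed

lemma sym_rel_of: "sym (rel_of M \<Gamma>)"
  by (auto simp: sym_def rel_of_def)

lemma unit_interval_eq_by_rational_thresholds:
  fixes x y :: real
  assumes "x \<in> {0..1}" "y \<in> {0..1}"
    and thresholds: "\<And>r. r \<in> \<rat> \<Longrightarrow> 0 \<le> r \<Longrightarrow> r \<le> 1 \<Longrightarrow> r < x \<longleftrightarrow> r < y"
  shows "x = y"
proof (rule ccontr)
  assume "x \<noteq> y"
  then have "min x y < max x y" by (auto simp: min_def max_def)
  then obtain r where "r \<in> \<rat>" "min x y < r" "r < max x y"
    using Rats_dense_in_real by blast
  with assms(1,2) thresholds[of r] show False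
    by (auto simp: min_def max_def split: if_splits)
qed

lemma stable_imp_rel_of_subset_relT_of:
  assumes "LMP M L \<tau>" and stable: "lmp_stable M L \<tau> \<Lambda>"
  shows "rel_of M \<Lambda> \<subseteq> relT_of M L \<tau> \<Lambda>"
proof (clarsimp simp: relT_of_def)
  fix s t assume "(s, t) \<in> rel_of M \<Lambda>"
  then have space: "s \<in> space M" "t \<in> space M"
    and same: "\<And>A. A \<in> \<Lambda> \<Longrightarrow> s \<in> A \<longleftrightarrow> t \<in> A"
    by (auto simp: rel_of_def)
  have "kern \<tau> a s E = kern \<tau> a t E" if a: "a \<in> L" and E: "E \<in> \<Lambda>" for a E
  proof (rule unit_interval_eq_by_rational_thresholds)
    show "kern \<tau> a s E \<in> {0..1}" "kern \<tau> a t E \<in> {0..1}"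
      using kern_bounded[OF assms(1) a] space by auto
    fix r :: real assume "r \<in> \<rat>" "0 \<le> r" "r \<le> 1"
    then have "{u \<in> space M. r < kern \<tau> a u E} \<in> \<Lambda>"
      using stable a E unfolding lmp_stable_def by blast
    then show "r < kern \<tau> a s E \<longleftrightarrow> r < kern \<tau> a t E"
      using same space by blast
  qed
  then show "s \<in> space M \<and> t \<in> space M \<and> (\<forall>a\<in>L. \<forall>E\<in>\<Lambda>. kern \<tau> a s E = kern \<tau> a t E)"
    using space by blast
qed

lemma superlevel_set_in_closed_sets:
  assumes "LMP M L \<tau>" "a \<in> L" "A \<in> \<Lambda>" "A \<in> sets M"
    and "R \<subseteq> relT_of M L \<tau> \<Lambda>"
  shows "{s \<in> space M. r < kern \<tau> a s A} \<in> closed_sets M R"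
  unfolding closed_sets_def
proof (rule CollectI, intro conjI allI impI)
  show "{s \<in> space M. r < kern \<tau> a s A} \<in> sets M"
    using kern_borel_measurable[OF assms(1-2,4)] by measurable
  fix x s assume x: "x \<in> {s \<in> space M. r < kern \<tau> a s A} \<and> (x, s) \<in> R"
  with assms(5) have "s \<in> space M" "kern \<tau> a x A = kern \<tau> a s A"
    using assms(2,3) by (auto simp: relT_of_def)
  with x show "s \<in> {s \<in> space M. r < kern \<tau> a s A}" by auto
qed

lemma rel_of_subset_relT_of_imp_stable:
  assumes "LMP M L \<tau>" "\<Lambda> \<subseteq> sets M"
    and closed: "closed_sets M (rel_of M \<Lambda>) \<subseteq> \<Lambda>"
    and "rel_of M \<Lambda> \<subseteq> relT_of M L \<tau> \<Lambda>"
  shows "lmp_stable M L \<tau> \<Lambda>"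
  unfolding lmp_stable_def
proof (intro ballI allI impI)
  fix A r a assume "A \<in> \<Lambda>" "a \<in> L"
  with assms(2) have "{s \<in> space M. r < kern \<tau> a s A} \<in> closed_sets M (rel_of M \<Lambda>)"
    using superlevel_set_in_closed_sets[OF assms(1) _ _ _ assms(4)] by blast
  with closed show "{s \<in> space M. r < kern \<tau> a s A} \<in> \<Lambda>" by blast
qed

lemma state_bisim_rel_of_iff:
  assumes "closed_sets M (rel_of M \<Lambda>) = \<Lambda>"
  shows "state_bisim M L \<tau> (rel_of M \<Lambda>) \<longleftrightarrow> rel_of M \<Lambda> \<subseteq> relT_of M L \<tau> \<Lambda>"
  unfolding state_bisim_def assms using sym_rel_of[of M \<Lambda>]
  by (auto simp: rel_of_def relT_of_def)

theorem lemma3p12: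
  fixes M :: "'a measure" and L :: "'l set" and \<tau> :: "'l \<Rightarrow> 'a \<Rightarrow> 'a measure"
    and \<Lambda> :: "'a set set"
  assumes "LMP M L \<tau>"
    and "sigma_algebra (space M) \<Lambda>" and "\<Lambda> \<subseteq> sets M"
    and "closed_sets M (rel_of M \<Lambda>) = \<Lambda>"
  shows "(lmp_stable M L \<tau> \<Lambda> \<longleftrightarrow> rel_of M \<Lambda> \<subseteq> relT_of M L \<tau> \<Lambda>)
       \<and> (rel_of M \<Lambda> \<subseteq> relT_of M L \<tau> \<Lambda> \<longleftrightarrow> state_bisim M L \<tau> (rel_of M \<Lambda>))"
  using stable_imp_rel_of_subset_relT_of[OF assms(1)]
    rel_of_subset_relT_of_imp_stable[OF assms(1,3) equalityD1[OF assms(4)]]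
    state_bisim_rel_of_iff[OF assms(4)]
  by blast

end
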